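(* Assume $K_1\subseteq K_2\subseteq\cdots\subseteq K_n\subseteq\mathbb F_q$ are subfields. Let $1\le h\le n$ and $p=\gamma_1X_1+\cdots+\gamma_hX_h+\eta\in\mathbb F_q[X_1,\dots,X_n]$ with $\gamma_1,\dots,\gamma_h,\eta\in\mathbb F_q$ and $\gamma_h\ne 0$, and let $j\in\{1,\dots,n\}$. Then there exists $\varphi\in\mathrm{Aff}(\mathcal X)$ with $X_j\circ\varphi=p$ if and only if $\gamma_i\in K_j$ for all $i\in\{1,\dots,h\}$, $\eta\in K_j$, and $K_h=K_j$.
   Context: $\mathcal X=K_1\times\cdots\times K_n\subseteq\mathbb F_q^n$. $\mathrm{Aff}(\mathbb F_q^n)$ is the group of maps $\boldsymbol\alpha\mapsto A\boldsymbol\alpha+\boldsymbol\beta$ with $A\in GL(n,\mathbb F_q)$, $\boldsymbol\beta\in\mathbb F_q^n$. $\mathrm{Aff}(\mathcal X)$ is the set of maps $\varphi:\mathcal X\to\mathcal X$ of the form $\varphi=\psi|_{\mathcal X}$ with $\psi\in\mathrm{Aff}(\mathbb F_q^n)$ and $\psi(\mathcal X)=\mathcal X$; such $\psi$ is unique. For $f\in\mathbb F_q[X_1,\dots,X_n]$ and $\varphi=\psi|_{\mathcal X}\in\mathrm{Aff}(\mathcal X)$, $f\circ\varphi$ is the polynomial $f(\psi(X_1,\dots,X_n))$, where $(X_1,\dots,X_n)$ is viewed as a column vector. *)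

theory Defs
  imports Main
begin

text \<open>The ambient finite field F_q is a type of class field and finite.
Vectors of F_q^n are functions nat to 'a, indexed by 1..n, and zero outside 1..n.\<close>

definition is_subfield :: "'a::field set \<Rightarrow> bool" where
  "is_subfield K \<longleftrightarrow> 0 \<in> K \<and> 1 \<in> K \<and>
     (\<forall>x\<in>K. \<forall>y\<in>K. x + y \<in> K \<and> x * y \<in> K) \<and>
     (\<forall>x\<in>K. - x \<in> K) \<and> (\<forall>x\<in>K. x \<noteq> 0 \<longrightarrow> inverse x \<in> K)"

definition vecs :: "nat \<Rightarrow> (nat \<Rightarrow> 'a::zero) set" where
  "vecs n = {x. \<forall>i. i \<notin> {1..n} \<longrightarrow> x i = 0}"

definition prodset :: "nat \<Rightarrow> (nat \<Rightarrow> 'a::zero set) \<Rightarrow> (nat \<Rightarrow> 'a) set" where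
  "prodset n K = {x \<in> vecs n. \<forall>i\<in>{1..n}. x i \<in> K i}"

definition invertible_mat_n :: "nat \<Rightarrow> (nat \<Rightarrow> nat \<Rightarrow> 'a::field) \<Rightarrow> bool" where
  "invertible_mat_n n A \<longleftrightarrow> (\<exists>B. \<forall>i\<in>{1..n}. \<forall>k\<in>{1..n}.
      (\<Sum>l=1..n. A i l * B l k) = (if i = k then 1 else 0) \<and>
      (\<Sum>l=1..n. B i l * A l k) = (if i = k then 1 else 0))"

definition aff_map :: "nat \<Rightarrow> (nat \<Rightarrow> nat \<Rightarrow> 'a::field) \<Rightarrow> (nat \<Rightarrow> 'a) \<Rightarrow> (nat \<Rightarrow> 'a) \<Rightarrow> (nat \<Rightarrow> 'a)" where
  "aff_map n A \<beta> x = (\<lambda>i. if i \<in> {1..n} then (\<Sum>k=1..n. A i k * x k) + \<beta> i else 0)"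

text \<open>Polynomials of total degree at most 1 in F_q[X_1,...,X_n], represented exactly by
their coefficients: a pair (c, d) stands for c 1 X_1 + ... + c n X_n + d, with c zero
outside 1..n (so equality of pairs is equality of polynomials).\<close>
type_synonym 'a lin_poly = "(nat \<Rightarrow> 'a) \<times> 'a"

definition lin_poly :: "nat \<Rightarrow> (nat \<Rightarrow> 'a::zero) \<Rightarrow> 'a \<Rightarrow> 'a lin_poly" where
  "lin_poly n c d = ((\<lambda>k. if k \<in> {1..n} then c k else 0), d)"

text \<open>The polynomial X_j o psi = X_j(A X + beta) = sum_k A j k X_k + beta j.\<close>
definition var_comp :: "nat \<Rightarrow> nat \<Rightarrow> (nat \<Rightarrow> nat \<Rightarrow> 'a::field) \<Rightarrow> (nat \<Rightarrow> 'a) \<Rightarrow> 'a lin_poly" where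
  "var_comp n j A \<beta> = lin_poly n (\<lambda>k. A j k) (\<beta> j)"

text \<open>Existence of phi in Aff(X) with X_j o phi = p.  Since phi = psi restricted to X with
psi affine and psi(X) = X, and X_j o phi is defined via psi.\<close>
definition exists_aff_comp :: "nat \<Rightarrow> (nat \<Rightarrow> 'a::field set) \<Rightarrow> nat \<Rightarrow> 'a lin_poly \<Rightarrow> bool" where
  "exists_aff_comp n K j p \<longleftrightarrow> (\<exists>A \<beta>. invertible_mat_n n A \<and>
      aff_map n A \<beta> ` prodset n K = prodset n K \<and> var_comp n j A \<beta> = p)"

end

theory Submission
  imports Defs "HOL-Combinatorics.Transposition"
begin

text \<open>Evaluating \<open>\<psi>(x) = A x + \<beta>\<close> on the vectors \<open>t e\<^sub>k\<close> of \<open>\<X>\<close> shows \<open>\<beta>\<^sub>i \<in> K\<^sub>i\<close>, \<open>A\<^sub>i\<^sub>k \<in> K\<^sub>i\<close>,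
and that \<open>A\<^sub>i\<^sub>k \<noteq> 0\<close> forces \<open>K\<^sub>k \<subseteq> K\<^sub>i\<close>; with row \<open>j\<close> of \<open>A\<close> equal to \<open>\<gamma>\<close> this yields
\<open>\<gamma>\<^sub>i, \<eta> \<in> K\<^sub>j\<close> and \<open>K\<^sub>h \<subseteq> K\<^sub>j\<close>. For \<open>K\<^sub>j \<subseteq> K\<^sub>h\<close> suppose that row \<open>j\<close> vanishes on
\<open>T = {k. K\<^sub>j \<subseteq> K\<^sub>k}\<close>. Then so do all rows outside \<open>T\<close>, hence the coordinates of \<open>\<psi>(x)\<close>
outside \<open>T - {j}\<close> depend only on the coordinates of \<open>x\<close> outside \<open>T\<close>. As \<open>\<psi>(\<X>) = \<X>\<close>, the
projection of the finite set \<open>\<X>\<close> to the coordinates outside \<open>T - {j}\<close> is then no larger than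
its projection to those outside \<open>T\<close>, although it strictly contains it (it contains \<open>e\<^sub>j\<close>).
Conversely, the affine map sending \<open>x\<^sub>j\<close> to \<open>\<gamma>\<^sub>1x\<^sub>1 + \<dots> + \<gamma>\<^sub>hx\<^sub>h + \<eta>\<close> and \<open>x\<^sub>h\<close> to \<open>x\<^sub>j\<close>, fixing all
other coordinates, is invertible as \<open>\<gamma>\<^sub>h \<noteq> 0\<close>; it maps \<open>\<X>\<close> into itself when \<open>K\<^sub>h = K\<^sub>j\<close>, hence
onto \<open>\<X>\<close> because \<open>\<X>\<close> is finite.\<close>

lemma subfield_zero: "is_subfield K \<Longrightarrow> 0 \<in> K"
  by (simp add: is_subfield_def)

lemma subfield_one: "is_subfield K \<Longrightarrow> 1 \<in> K"
  by (simp add: is_subfield_def)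

lemma subfield_add: "is_subfield K \<Longrightarrow> a \<in> K \<Longrightarrow> b \<in> K \<Longrightarrow> a + b \<in> K"
  by (simp add: is_subfield_def)

lemma subfield_mult: "is_subfield K \<Longrightarrow> a \<in> K \<Longrightarrow> b \<in> K \<Longrightarrow> a * b \<in> K"
  by (simp add: is_subfield_def)

lemma subfield_diff: "is_subfield K \<Longrightarrow> a \<in> K \<Longrightarrow> b \<in> K \<Longrightarrow> a - b \<in> K"
  unfolding is_subfield_def by (metis diff_conv_add_uminus)

lemma subfield_mult_cancel_left:
  assumes "is_subfield K" "a \<in> K" "a \<noteq> 0" "a * t \<in> K"
  shows "t \<in> K"
proof -
  have "inverse a * (a * t) \<in> K"
    using assms unfolding is_subfield_def by auto
  then show ?thesis
    using \<open>a \<noteq> 0\<close> by (simp add: mult.assoc[symmetric])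
qed

lemma subfield_sum:
  assumes "is_subfield K" "\<And>k. k \<in> S \<Longrightarrow> f k \<in> K"
  shows "sum f S \<in> K"
proof (cases "finite S")
  case True
  then show ?thesis
    using assms(2) by (induction S rule: finite_induct) (auto intro: subfield_add subfield_zero assms(1))
qed (simp add: subfield_zero[OF assms(1)])

lemma finite_prodset: "finite (prodset n K :: (nat \<Rightarrow> 'a::{finite,zero}) set)"
proof -
  have "vecs n = {f::nat \<Rightarrow> 'a. \<forall>x. (x \<in> {1..n} \<longrightarrow> f x \<in> UNIV) \<and> (x \<notin> {1..n} \<longrightarrow> f x = 0)}"
    unfolding vecs_def by auto
  then have "finite (vecs n :: (nat \<Rightarrow> 'a) set)"
    using finite_set_of_finite_funs[of "{1..n}" "UNIV :: 'a set" 0] by simp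
  then show ?thesis
    unfolding prodset_def by (rule rev_finite_subset) auto
qed

lemma chain_subset:
  assumes chain: "\<forall>i. 1 \<le> i \<and> i < n \<longrightarrow> K i \<subseteq> K (Suc i)"
    and "1 \<le> i" "i \<le> k" "k \<le> n"
  shows "K i \<subseteq> K k"
  using assms(3,4)
proof (induction k rule: dec_induct)
  case (step m)
  then have "K i \<subseteq> K m"
    by simp
  also have "K m \<subseteq> K (Suc m)"
    using chain step assms(2) by simp
  finally show ?case .
qed simp

lemma single_in_prodset:
  assumes "\<forall>i\<in>{1..n}. is_subfield (K i)" "k \<in> {1..n}" "t \<in> K k"
  shows "(\<lambda>l. if l = k then t else 0) \<in> prodset n K"
  using assms unfolding prodset_def vecs_def by (auto simp: subfield_zero)

lemma aff_map_single:
  assumes "i \<in> {1..n}" "k \<in> {1..n}"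
  shows "aff_map n A \<beta> (\<lambda>l. if l = k then t else 0) i = A i k * t + \<beta> i"
  using assms unfolding aff_map_def by (simp add: if_distrib cong: if_cong)

context
  fixes K :: "nat \<Rightarrow> 'a::field set" and n :: nat and A :: "nat \<Rightarrow> nat \<Rightarrow> 'a" and \<beta> :: "nat \<Rightarrow> 'a"
  assumes subf: "\<forall>i\<in>{1..n}. is_subfield (K i)"
    and stable: "aff_map n A \<beta> ` prodset n K \<subseteq> prodset n K"
begin

lemma stable_single_coord:
  assumes "i \<in> {1..n}" "k \<in> {1..n}" "t \<in> K k"
  shows "A i k * t + \<beta> i \<in> K i"
proof -
  have "aff_map n A \<beta> (\<lambda>l. if l = k then t else 0) \<in> prodset n K"
    using stable single_in_prodset[OF subf assms(2,3)] by blast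
  then have "aff_map n A \<beta> (\<lambda>l. if l = k then t else 0) i \<in> K i"
    using assms(1) unfolding prodset_def by blast
  then show ?thesis
    by (simp only: aff_map_single[OF assms(1,2)])
qed

lemma stable_translation_mem:
  assumes "i \<in> {1..n}"
  shows "\<beta> i \<in> K i"
  using stable_single_coord[OF assms assms subfield_zero] subf assms by simp

lemma stable_coeff_scaled_mem:
  assumes "i \<in> {1..n}" "k \<in> {1..n}" "t \<in> K k"
  shows "A i k * t \<in> K i"
  using subfield_diff[OF _ stable_single_coord[OF assms] stable_translation_mem[OF assms(1)]]
    subf assms(1) by simp

lemma stable_coeff_mem:
  assumes "i \<in> {1..n}" "k \<in> {1..n}"
  shows "A i k \<in> K i"
  using stable_coeff_scaled_mem[OF assms subfield_one] subf assms by simp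

lemma stable_coeff_nonzero_subset:
  assumes "i \<in> {1..n}" "k \<in> {1..n}" "A i k \<noteq> 0"
  shows "K k \<subseteq> K i"
  using subfield_mult_cancel_left[OF _ stable_coeff_mem[OF assms(1,2)] assms(3)]
    stable_coeff_scaled_mem[OF assms(1,2)] subf assms(1) by blast

end

lemma card_image_le_if_factors_through:
  assumes "finite X" "f ` X = X" "\<And>x. x \<in> X \<Longrightarrow> r (f x) = r (f (g x))"
  shows "card (r ` X) \<le> card (g ` X)"
proof -
  have "r ` X = r ` f ` X"
    using assms(2) by simp
  also have "\<dots> = (\<lambda>x. r (f (g x))) ` X"
    using assms(3) by (simp add: image_image cong: image_cong)
  also have "\<dots> = (\<lambda>y. r (f y)) ` g ` X"
    by (simp add: image_image)
  finally show ?thesis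
    using assms(1) by (simp add: card_image_le)
qed

lemma aff_map_onto_prodset_row_hits_superfield:
  fixes K :: "nat \<Rightarrow> 'a::{field,finite} set"
  assumes subf: "\<forall>i\<in>{1..n}. is_subfield (K i)"
    and onto: "aff_map n A \<beta> ` prodset n K = prodset n K"
    and j: "j \<in> {1..n}"
  shows "\<exists>k\<in>{1..n}. K j \<subseteq> K k \<and> A j k \<noteq> 0"
proof (rule ccontr)
  assume row_j: "\<not> ?thesis"
  define T where "T = {k\<in>{1..n}. K j \<subseteq> K k}"
  define g :: "(nat \<Rightarrow> 'a) \<Rightarrow> nat \<Rightarrow> 'a" where "g x = (\<lambda>k. if k \<in> T then 0 else x k)" for x
  define r :: "(nat \<Rightarrow> 'a) \<Rightarrow> nat \<Rightarrow> 'a" where "r y = (\<lambda>k. if k \<in> T - {j} then 0 else y k)" for y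
  let ?X = "prodset n K" and ?\<psi> = "aff_map n A \<beta>"
  have vanish: "A i k = 0" if "i \<in> {1..n}" "k \<in> T" "i = j \<or> i \<notin> T" for i k
  proof (rule ccontr)
    assume "A i k \<noteq> 0"
    with that have "K k \<subseteq> K i"
      using stable_coeff_nonzero_subset[OF subf] onto unfolding T_def by blast
    then show False
      using that row_j \<open>A i k \<noteq> 0\<close> unfolding T_def by blast
  qed
  have "r (?\<psi> x) = r (?\<psi> (g x))" for x
  proof
    fix i
    have "(\<Sum>k=1..n. A i k * x k) = (\<Sum>k=1..n. A i k * g x k)" if "i \<in> {1..n}" "i \<notin> T - {j}"
      using vanish[of i] that by (intro sum.cong) (auto simp: g_def)
    then show "r (?\<psi> x) i = r (?\<psi> (g x)) i"
      unfolding r_def aff_map_def by simp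
  qed
  then have "card (r ` ?X) \<le> card (g ` ?X)"
    using card_image_le_if_factors_through[OF finite_prodset onto] by blast
  moreover have "g ` ?X \<subset> r ` ?X"
  proof
    have "g x \<in> ?X" if "x \<in> ?X" for x
      using that subf unfolding prodset_def vecs_def g_def by (auto simp: subfield_zero)
    moreover have "r (g x) = g x" for x
      unfolding r_def g_def by auto
    ultimately show "g ` ?X \<subseteq> r ` ?X"
      by (metis image_subsetI rev_image_eqI)
    define e :: "nat \<Rightarrow> 'a" where "e = (\<lambda>k. if k = j then 1 else 0)"
    have "e \<in> ?X"
      unfolding e_def using single_in_prodset[OF subf j subfield_one] subf j by simp
    moreover have "r e = e"
      unfolding r_def e_def by auto
    moreover have "e \<noteq> g x" for x
    proof -
      have "j \<in> T"
        using j by (simp add: T_def)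
      then have "g x j \<noteq> e j"
        by (simp add: g_def e_def)
      then show ?thesis
        by auto
    qed
    ultimately show "g ` ?X \<noteq> r ` ?X"
      by (metis imageE rev_image_eqI)
  qed
  then have "card (g ` ?X) < card (r ` ?X)"
    by (simp add: finite_prodset psubset_card_mono)
  ultimately show False
    by simp
qed

lemma mat_left_inverse_recovers:
  fixes A B :: "nat \<Rightarrow> nat \<Rightarrow> 'a::field"
  assumes inv: "\<forall>i\<in>{1..n}. \<forall>k\<in>{1..n}. (\<Sum>l=1..n. B i l * A l k) = (if i = k then 1 else 0)"
    and m: "m \<in> {1..n}"
  shows "(\<Sum>l=1..n. B m l * (\<Sum>k=1..n. A l k * x k)) = x m"
proof -
  have "(\<Sum>l=1..n. B m l * (\<Sum>k=1..n. A l k * x k)) = (\<Sum>k=1..n. \<Sum>l=1..n. B m l * A l k * x k)"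
    by (subst sum.swap) (simp add: sum_distrib_left mult.assoc)
  also have "\<dots> = (\<Sum>k=1..n. (if m = k then 1 else 0) * x k)"
    using inv m by (intro sum.cong) (auto simp: sum_distrib_right[symmetric])
  also have "\<dots> = x m"
    using m by (simp add: if_distrib[of "\<lambda>a. a * _"] cong: if_cong)
  finally show ?thesis .
qed

lemma inj_on_aff_map_vecs:
  assumes "invertible_mat_n n A"
  shows "inj_on (aff_map n A \<beta>) (vecs n)"
proof
  fix x y
  assume x: "x \<in> vecs n" and y: "y \<in> vecs n" and eq: "aff_map n A \<beta> x = aff_map n A \<beta> y"
  obtain B where inv: "\<forall>i\<in>{1..n}. \<forall>k\<in>{1..n}. (\<Sum>l=1..n. B i l * A l k) = (if i = k then 1 else 0)"
    using assms unfolding invertible_mat_n_def by blast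
  have rows: "(\<Sum>k=1..n. A l k * x k) = (\<Sum>k=1..n. A l k * y k)" if "l \<in> {1..n}" for l
    using fun_cong[OF eq, of l] that unfolding aff_map_def by simp
  show "x = y"
  proof
    fix m
    show "x m = y m"
    proof (cases "m \<in> {1..n}")
      case True
      have "x m = (\<Sum>l=1..n. B m l * (\<Sum>k=1..n. A l k * x k))"
        using mat_left_inverse_recovers[OF inv True] by simp
      also have "\<dots> = (\<Sum>l=1..n. B m l * (\<Sum>k=1..n. A l k * y k))"
        using rows by simp
      also have "\<dots> = y m"
        using mat_left_inverse_recovers[OF inv True] by simp
      finally show ?thesis .
    qed (use x y in \<open>simp add: vecs_def\<close>)
  qed
qed

lemma aff_map_image_prodset_eq:
  fixes K :: "nat \<Rightarrow> 'a::{field,finite} set"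
  assumes "invertible_mat_n n A" "aff_map n A \<beta> ` prodset n K \<subseteq> prodset n K"
  shows "aff_map n A \<beta> ` prodset n K = prodset n K"
proof (rule endo_inj_surj[OF finite_prodset assms(2)])
  show "inj_on (aff_map n A \<beta>) (prodset n K)"
    using inj_on_aff_map_vecs[OF assms(1)] by (rule inj_on_subset) (auto simp: prodset_def)
qed

text \<open>The linear part of the map sending \<open>x\<^sub>j\<close> to \<open>c \<bullet> x\<close> and \<open>x\<^sub>h\<close> to \<open>x\<^sub>j\<close>, fixing all other
coordinates: the permutation matrix of \<open>(h j)\<close> with row \<open>j\<close> replaced by \<open>c\<close>. Its inverse
solves the row \<open>j\<close> equation for \<open>x\<^sub>h\<close>.\<close>

definition pivot_mat :: "nat \<Rightarrow> nat \<Rightarrow> (nat \<Rightarrow> 'a::field) \<Rightarrow> nat \<Rightarrow> nat \<Rightarrow> 'a" where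
  "pivot_mat h j c i k = (if i = j then c k else if k = transpose h j i then 1 else 0)"

definition pivot_mat_inv :: "nat \<Rightarrow> nat \<Rightarrow> (nat \<Rightarrow> 'a::field) \<Rightarrow> nat \<Rightarrow> nat \<Rightarrow> 'a" where
  "pivot_mat_inv h j c i k =
     (if i = h then (if k = j then 1 else - c (transpose h j k)) / c h
      else if k = transpose h j i then 1 else 0)"

lemma transpose_in_atLeastAtMost:
  "h \<in> {1..n} \<Longrightarrow> j \<in> {1..n} \<Longrightarrow> i \<in> {1..n} \<Longrightarrow> transpose h j i \<in> {1..(n::nat)}"
  by (auto simp: transpose_def)

lemma sum_mult_indicator_transpose:
  fixes f :: "nat \<Rightarrow> 'a::semiring_1"
  assumes "finite S"
  shows "(\<Sum>l\<in>S. f l * (if k = transpose h j l then 1 else 0))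
    = (if transpose h j k \<in> S then f (transpose h j k) else 0)"
proof -
  have "(\<Sum>l\<in>S. f l * (if k = transpose h j l then 1 else 0))
      = (\<Sum>l\<in>S. if l = transpose h j k then f l else 0)"
    by (rule sum.cong) (auto simp: transpose_def)
  then show ?thesis
    using assms by simp
qed

lemma pivot_mat_right_inverse:
  assumes "h \<in> {1..n}" "j \<in> {1..n}" "c h \<noteq> 0" "i \<in> {1..n}" "k \<in> {1..n}"
  shows "(\<Sum>l=1..n. pivot_mat h j c i l * pivot_mat_inv h j c l k) = (if i = k then 1 else 0)"
proof (cases "i = j")
  case False
  then show ?thesis
    using assms
    by (simp add: pivot_mat_def if_distrib[of "\<lambda>x. x * _"] transpose_in_atLeastAtMost cong: if_cong)
      (auto simp: pivot_mat_inv_def transpose_eq_iff)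
next
  case True
  have "(\<Sum>l=1..n. pivot_mat h j c i l * pivot_mat_inv h j c l k)
      = c h * pivot_mat_inv h j c h k
        + (\<Sum>l\<in>{1..n} - {h}. c l * (if k = transpose h j l then 1 else 0))"
    using assms True by (simp add: sum.remove[of _ h] pivot_mat_def pivot_mat_inv_def)
  also have "\<dots> = (if i = k then 1 else 0)"
    using assms True transpose_in_atLeastAtMost[OF assms(1,2,5)]
    by (auto simp: sum_mult_indicator_transpose pivot_mat_inv_def transpose_eq_iff)
  finally show ?thesis .
qed

lemma pivot_mat_left_inverse:
  assumes "h \<in> {1..n}" "j \<in> {1..n}" "c h \<noteq> 0" "i \<in> {1..n}" "k \<in> {1..n}"
  shows "(\<Sum>l=1..n. pivot_mat_inv h j c i l * pivot_mat h j c l k) = (if i = k then 1 else 0)"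
proof (cases "i = h")
  case False
  then show ?thesis
    using assms
    by (simp add: pivot_mat_inv_def if_distrib[of "\<lambda>x. x * _"] transpose_in_atLeastAtMost cong: if_cong)
      (auto simp: pivot_mat_def transpose_eq_iff)
next
  case True
  have "(\<Sum>l=1..n. pivot_mat_inv h j c i l * pivot_mat h j c l k)
      = c k / c h
        + (\<Sum>l\<in>{1..n} - {j}. (- c (transpose h j l) / c h) * (if k = transpose h j l then 1 else 0))"
    using assms True by (simp add: sum.remove[of _ j] pivot_mat_def pivot_mat_inv_def)
  also have "\<dots> = (if i = k then 1 else 0)"
    using assms True transpose_in_atLeastAtMost[OF assms(1,2,5)]
    by (subst sum_mult_indicator_transpose) (auto simp: transpose_eq_iff)
  finally show ?thesis .
qed

lemma invertible_pivot_mat: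
  assumes "h \<in> {1..n}" "j \<in> {1..n}" "c h \<noteq> 0"
  shows "invertible_mat_n n (pivot_mat h j c)"
proof -
  have "(\<Sum>l=1..n. pivot_mat h j c i l * pivot_mat_inv h j c l k) = (if i = k then 1 else 0)
      \<and> (\<Sum>l=1..n. pivot_mat_inv h j c i l * pivot_mat h j c l k) = (if i = k then 1 else 0)"
    if "i \<in> {1..n}" "k \<in> {1..n}" for i k
    using pivot_mat_right_inverse[of h n j c i k] pivot_mat_left_inverse[of h n j c i k] assms that
    by blast
  then show ?thesis
    unfolding invertible_mat_n_def by (intro exI[of _ "pivot_mat_inv h j c"]) blast
qed

lemma var_comp_pivot_mat: "var_comp n j (pivot_mat h j c) \<beta> = lin_poly n c (\<beta> j)"
  by (simp add: var_comp_def pivot_mat_def)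

lemma pivot_aff_map_stable:
  fixes K :: "nat \<Rightarrow> 'a::field set"
  assumes subf: "\<forall>i\<in>{1..n}. is_subfield (K i)"
    and h: "h \<in> {1..n}" and j: "j \<in> {1..n}" and Khj: "K h = K j"
    and coeff: "\<And>k. k \<in> {1..n} \<Longrightarrow> c k \<in> K j"
    and supp: "\<And>k. k \<in> {1..n} \<Longrightarrow> c k \<noteq> 0 \<Longrightarrow> K k \<subseteq> K j"
    and \<eta>: "\<eta> \<in> K j"
  shows "aff_map n (pivot_mat h j c) (\<lambda>i. if i = j then \<eta> else 0) ` prodset n K \<subseteq> prodset n K"
proof (rule image_subsetI)
  fix x
  assume x: "x \<in> prodset n K"
  let ?y = "aff_map n (pivot_mat h j c) (\<lambda>i. if i = j then \<eta> else 0) x"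
  have xK: "x k \<in> K k" if "k \<in> {1..n}" for k
    using x that unfolding prodset_def by auto
  have sfj: "is_subfield (K j)"
    using subf j by blast
  have "?y i \<in> K i" if i: "i \<in> {1..n}" for i
  proof (cases "i = j")
    case True
    have "c k * x k \<in> K j" if "k \<in> {1..n}" for k
      using supp[OF that] xK[OF that] coeff[OF that] subfield_mult[OF sfj] subfield_zero[OF sfj]
      by (cases "c k = 0") auto
    then have "(\<Sum>k=1..n. c k * x k) + \<eta> \<in> K j"
      by (intro subfield_add[OF sfj] subfield_sum[OF sfj] \<eta>)
    then show ?thesis
      using i True unfolding aff_map_def pivot_mat_def by simp
  next
    case False
    have "?y i = x (transpose h j i)"
      using i False transpose_in_atLeastAtMost[OF h j i]
      by (simp add: aff_map_def pivot_mat_def if_distrib[of "\<lambda>a. a * _"] cong: if_cong)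
    moreover have "K (transpose h j i) = K i"
      using Khj by (simp add: transpose_def)
    ultimately show ?thesis
      using xK[OF transpose_in_atLeastAtMost[OF h j i]] by simp
  qed
  moreover have "?y \<in> vecs n"
    unfolding vecs_def aff_map_def by auto
  ultimately show "?y \<in> prodset n K"
    unfolding prodset_def by blast
qed

lemma exists_aff_comp_lin_poly_iff:
  fixes K :: "nat \<Rightarrow> 'a::{field,finite} set"
  assumes subf: "\<forall>i\<in>{1..n}. is_subfield (K i)"
    and j: "j \<in> {1..n}"
  shows "exists_aff_comp n K j (lin_poly n c \<eta>) \<longleftrightarrow>
    (\<forall>k\<in>{1..n}. c k \<in> K j \<and> (c k \<noteq> 0 \<longrightarrow> K k \<subseteq> K j)) \<and> \<eta> \<in> K j \<and>
    (\<exists>k\<in>{1..n}. c k \<noteq> 0 \<and> K k = K j)"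
proof
  assume "exists_aff_comp n K j (lin_poly n c \<eta>)"
  then obtain A \<beta> where onto: "aff_map n A \<beta> ` prodset n K = prodset n K"
    and vc: "var_comp n j A \<beta> = lin_poly n c \<eta>"
    unfolding exists_aff_comp_def by blast
  note stable = subf equalityD1[OF onto]
  have row: "A j k = c k" if "k \<in> {1..n}" for k
    using fun_cong[OF arg_cong[OF vc, of fst], of k] that by (simp add: var_comp_def lin_poly_def)
  have "\<beta> j = \<eta>"
    using arg_cong[OF vc, of snd] by (simp add: var_comp_def lin_poly_def)
  have coeffs: "\<forall>k\<in>{1..n}. c k \<in> K j \<and> (c k \<noteq> 0 \<longrightarrow> K k \<subseteq> K j)"
    using stable_coeff_mem[OF stable j] stable_coeff_nonzero_subset[OF stable j] row by simp
  moreover have "\<eta> \<in> K j"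
    using stable_translation_mem[OF stable j] \<open>\<beta> j = \<eta>\<close> by simp
  moreover have "\<exists>k\<in>{1..n}. c k \<noteq> 0 \<and> K j \<subseteq> K k"
    using aff_map_onto_prodset_row_hits_superfield[OF subf onto j] row by auto
  ultimately show "(\<forall>k\<in>{1..n}. c k \<in> K j \<and> (c k \<noteq> 0 \<longrightarrow> K k \<subseteq> K j)) \<and> \<eta> \<in> K j \<and>
      (\<exists>k\<in>{1..n}. c k \<noteq> 0 \<and> K k = K j)"
    by blast
next
  assume "(\<forall>k\<in>{1..n}. c k \<in> K j \<and> (c k \<noteq> 0 \<longrightarrow> K k \<subseteq> K j)) \<and> \<eta> \<in> K j \<and>
      (\<exists>k\<in>{1..n}. c k \<noteq> 0 \<and> K k = K j)"
  then obtain h where h: "h \<in> {1..n}" "c h \<noteq> 0" "K h = K j"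
    and coeffs: "\<forall>k\<in>{1..n}. c k \<in> K j \<and> (c k \<noteq> 0 \<longrightarrow> K k \<subseteq> K j)" and "\<eta> \<in> K j"
    by blast
  let ?\<beta> = "\<lambda>i. if i = j then \<eta> else 0"
  have invertible: "invertible_mat_n n (pivot_mat h j c)"
    using invertible_pivot_mat[of h n j c] h j by blast
  have "aff_map n (pivot_mat h j c) ?\<beta> ` prodset n K \<subseteq> prodset n K"
    using h(3) coeffs \<open>\<eta> \<in> K j\<close> by (intro pivot_aff_map_stable[OF subf h(1) j]) auto
  then have "aff_map n (pivot_mat h j c) ?\<beta> ` prodset n K = prodset n K"
    by (rule aff_map_image_prodset_eq[OF invertible])
  moreover have "var_comp n j (pivot_mat h j c) ?\<beta> = lin_poly n c \<eta>"
    by (simp add: var_comp_pivot_mat)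
  ultimately show "exists_aff_comp n K j (lin_poly n c \<eta>)"
    unfolding exists_aff_comp_def using invertible by blast
qed

theorem mainTheorem8:
  fixes K :: "nat \<Rightarrow> 'a::{field,finite} set"
    and n h j :: nat and \<gamma> :: "nat \<Rightarrow> 'a" and \<eta> :: 'a
  assumes subf: "\<forall>i\<in>{1..n}. is_subfield (K i)"
    and chain: "\<forall>i. 1 \<le> i \<and> i < n \<longrightarrow> K i \<subseteq> K (Suc i)"
    and h: "1 \<le> h" "h \<le> n"
    and gh: "\<gamma> h \<noteq> 0"
    and j: "j \<in> {1..n}"
  shows "exists_aff_comp n K j (lin_poly n (\<lambda>k. if k \<le> h then \<gamma> k else 0) \<eta>)
     \<longleftrightarrow> (\<forall>i\<in>{1..h}. \<gamma> i \<in> K j) \<and> \<eta> \<in> K j \<and> K h = K j"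
    (is "exists_aff_comp n K j (lin_poly n ?c \<eta>) \<longleftrightarrow> ?rhs")
proof -
  have hn: "h \<in> {1..n}"
    using h by simp
  have supp_le_h: "K k \<subseteq> K h" if "k \<in> {1..n}" "?c k \<noteq> 0" for k
    using chain_subset[OF chain, of k h] h that by (simp split: if_splits)
  have "(\<forall>k\<in>{1..n}. ?c k \<in> K j \<and> (?c k \<noteq> 0 \<longrightarrow> K k \<subseteq> K j)) \<and> \<eta> \<in> K j \<and>
      (\<exists>k\<in>{1..n}. ?c k \<noteq> 0 \<and> K k = K j) \<longleftrightarrow> ?rhs"
  proof
    assume ?rhs
    then show "(\<forall>k\<in>{1..n}. ?c k \<in> K j \<and> (?c k \<noteq> 0 \<longrightarrow> K k \<subseteq> K j)) \<and> \<eta> \<in> K j \<and>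
        (\<exists>k\<in>{1..n}. ?c k \<noteq> 0 \<and> K k = K j)"
      using supp_le_h subfield_zero[of "K j"] subf j hn gh by auto
  next
    assume conds: "(\<forall>k\<in>{1..n}. ?c k \<in> K j \<and> (?c k \<noteq> 0 \<longrightarrow> K k \<subseteq> K j)) \<and> \<eta> \<in> K j \<and>
        (\<exists>k\<in>{1..n}. ?c k \<noteq> 0 \<and> K k = K j)"
    then obtain k where "k \<in> {1..n}" "?c k \<noteq> 0" "K k = K j"
      by blast
    then have "K j \<subseteq> K h"
      using supp_le_h by blast
    moreover have "K h \<subseteq> K j"
      using conds hn gh by simp
    moreover have "\<gamma> i \<in> K j" if "i \<in> {1..h}" for i
    proof -
      have "i \<in> {1..n}" "i \<le> h"
        using that h by auto
      then show ?thesis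
        using conds by fastforce
    qed
    ultimately show ?rhs
      using conds by blast
  qed
  then show ?thesis
    by (simp only: exists_aff_comp_lin_poly_iff[OF subf j])
qed

end
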